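(* Let $G=(\Sigma,S,s_0,\delta)$ be a commutative grammar. If $D$ is a simple cycle or a skeleton run of $G$, then $\|\mathrm{out}(D)\|=O\!\left(2^{|S|^{O(1)}}\right)$, where the implicit constants are absolute (independent of $G$ and $D$).
   Context: For $v\in\mathbb{N}^X$, $|v|=\sum_x v(x)$ and $\|v\|=\max_x v(x)$. A commutative grammar is $G=(\Sigma,S,s_0,\delta)$ with finite alphabet $\Sigma$, finite state set $S$, $s_0\in S$, and a finite set $\delta\subseteq S\times\mathbb{N}^\Sigma\times\mathbb{N}^S$ of transitions $\tau=(s,a,t)$ ($\mathrm{source}(\tau)=s$, $\mathrm{out}(\tau)=a$, $\mathrm{target}(\tau)=t$); every state is the source of some transition, and every transition has $|a|\le1$, $|t|\le2$. For $D\in\mathbb{N}^\delta$ let $\mathrm{source}(D)(s)=\sum_{\mathrm{source}(\tau)=s}D(\tau)$, $\mathrm{out}(D)=\sum_\tau D(\tau)\mathrm{out}(\tau)$, $\mathrm{target}(D)=\sum_\tau D(\tau)\mathrm{target}(\tau)$, $\mathrm{supp}(D)=\{s:\mathrm{source}(D)(s)>0\}$. $D$ is connected from $s$ if every $t\in\mathrm{supp}(D)$ equals $s$ or is reachable by transitions $\tau_1,\ldots,\tau_m$ with $D(\tau_i)>0$, $\mathrm{source}(\tau_1)=s$, $\mathrm{source}(\tau_{i+1})\in\mathrm{target}(\tau_i)$, $t\in\mathrm{target}(\tau_m)$. $D$ is a cycle from $s$ if it is connected from $s$ and $\mathrm{source}(D)=\mathrm{target}(D)$; a cycle is a cycle from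 some state. $D$ is a run if it is connected from $s_0$ and $\mathrm{source}(D)=\mathrm{target}(D)+\{s_0\}$. A simple cycle is a nonzero cycle that cannot be written as a sum of smaller nonzero cycles. A skeleton run is a run $D$ which cannot be written as $D=D_1+C$ with $D_1$ a run, $C$ a nonzero cycle, and $\mathrm{supp}(D_1)=\mathrm{supp}(D)$. *)

theory Defs
  imports Main "HOL-Library.Multiset"
begin

text \<open>Letters and states are encoded as natural numbers (every finite grammar is
isomorphic to one of this form); this lets the constants be quantified before
all grammars. Vectors in N^X are multisets over X. A transition (s,a,t) is a
triple; a vector D in N^delta is a multiset of transitions contained in delta.\<close>

type_synonym trans = "nat \<times> nat multiset \<times> nat multiset"

definition tr_source :: "trans \<Rightarrow> nat" where "tr_source \<tau> = fst \<tau>"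
definition tr_out :: "trans \<Rightarrow> nat multiset" where "tr_out \<tau> = fst (snd \<tau>)"
definition tr_target :: "trans \<Rightarrow> nat multiset" where "tr_target \<tau> = snd (snd \<tau>)"

definition vnorm :: "nat multiset \<Rightarrow> nat" where
  "vnorm v = Max (insert 0 (count v ` set_mset v))"

definition comm_grammar :: "nat set \<Rightarrow> nat set \<Rightarrow> nat \<Rightarrow> trans set \<Rightarrow> bool" where
  "comm_grammar \<Sigma> S s0 \<delta> \<longleftrightarrow>
     finite \<Sigma> \<and> finite S \<and> s0 \<in> S \<and> finite \<delta> \<and>
     (\<forall>\<tau>\<in>\<delta>. tr_source \<tau> \<in> S \<and> set_mset (tr_out \<tau>) \<subseteq> \<Sigma> \<and> set_mset (tr_target \<tau>) \<subseteq> S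
            \<and> size (tr_out \<tau>) \<le> 1 \<and> size (tr_target \<tau>) \<le> 2) \<and>
     (\<forall>s\<in>S. \<exists>\<tau>\<in>\<delta>. tr_source \<tau> = s)"

definition msource :: "trans multiset \<Rightarrow> nat multiset" where
  "msource D = image_mset tr_source D"
definition mout :: "trans multiset \<Rightarrow> nat multiset" where
  "mout D = sum_mset (image_mset tr_out D)"
definition mtarget :: "trans multiset \<Rightarrow> nat multiset" where
  "mtarget D = sum_mset (image_mset tr_target D)"
definition msupp :: "trans multiset \<Rightarrow> nat set" where
  "msupp D = set_mset (msource D)"

definition reachable_in :: "trans multiset \<Rightarrow> nat \<Rightarrow> nat \<Rightarrow> bool" where
  "reachable_in D s t \<longleftrightarrow> (\<exists>\<tau>s. \<tau>s \<noteq> [] \<and> set \<tau>s \<subseteq> set_mset D \<and>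
      tr_source (hd \<tau>s) = s \<and>
      (\<forall>i. Suc i < length \<tau>s \<longrightarrow> tr_source (\<tau>s ! Suc i) \<in># tr_target (\<tau>s ! i)) \<and>
      t \<in># tr_target (last \<tau>s))"

definition connected_from :: "trans multiset \<Rightarrow> nat \<Rightarrow> bool" where
  "connected_from D s \<longleftrightarrow> (\<forall>t\<in>msupp D. t = s \<or> reachable_in D s t)"

definition is_cycle :: "trans set \<Rightarrow> trans multiset \<Rightarrow> bool" where
  "is_cycle \<delta> D \<longleftrightarrow> set_mset D \<subseteq> \<delta> \<and> (\<exists>s. connected_from D s) \<and> msource D = mtarget D"

definition simple_cycle :: "trans set \<Rightarrow> trans multiset \<Rightarrow> bool" where
  "simple_cycle \<delta> D \<longleftrightarrow> D \<noteq> {#} \<and> is_cycle \<delta> D \<and>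
     \<not> (\<exists>Cs. length Cs \<ge> 2 \<and> (\<forall>C\<in>set Cs. C \<noteq> {#} \<and> is_cycle \<delta> C) \<and> D = sum_list Cs)"

definition is_run :: "trans set \<Rightarrow> nat \<Rightarrow> trans multiset \<Rightarrow> bool" where
  "is_run \<delta> s0 D \<longleftrightarrow> set_mset D \<subseteq> \<delta> \<and> connected_from D s0 \<and> msource D = mtarget D + {#s0#}"

definition skeleton_run :: "trans set \<Rightarrow> nat \<Rightarrow> trans multiset \<Rightarrow> bool" where
  "skeleton_run \<delta> s0 D \<longleftrightarrow> is_run \<delta> s0 D \<and>
     \<not> (\<exists>D1 C. is_run \<delta> s0 D1 \<and> C \<noteq> {#} \<and> is_cycle \<delta> C \<and> msupp D1 = msupp D \<and> D = D1 + C)"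

end

theory Submission
  imports Defs
begin

text \<open>Greedily split a multiset of transitions into a part without nonempty balanced
  sub-multisets and cycles that are minimal balanced sub-multisets. Gluing transitions into
  derivation trees turns a minimal balanced multiset into a single tree whose only open leaf is its
  root, and a run without balanced parts into a closed tree from s0. In such trees no proper subtree
  can reproduce the root with the same open leaves, so states on root-to-leaf paths are distinct:
  a closed tree has fewer than 2^n transitions and a tree with one open leaf at most n 2^n
  (n = |S|). A simple cycle is one such minimal cycle. In a skeleton run every cycle of the
  decomposition owns a transition shape (source and targets) occurring nowhere else, since
  otherwise removing it leaves a run with the same support; so there are at most n (1 + n + n^2)
  cycles. Hence |D|, which bounds the norm of out(D), is at most (n+1)^4 2^n \<le> 64 2^(n^2).\<close>

abbreviation balanced :: "trans multiset \<Rightarrow> bool" where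
  "balanced D \<equiv> msource D = mtarget D"

lemma msource_simps [simp]:
  "msource {#} = {#}" "msource (A + B) = msource A + msource B"
  "msource (add_mset \<tau> A) = add_mset (tr_source \<tau>) (msource A)"
  by (auto simp: msource_def)

lemma mtarget_simps [simp]:
  "mtarget {#} = {#}" "mtarget (A + B) = mtarget A + mtarget B"
  "mtarget (add_mset \<tau> A) = tr_target \<tau> + mtarget A"
  by (auto simp: mtarget_def)

lemma msupp_simps [simp]:
  "msupp {#} = {}" "msupp (A + B) = msupp A \<union> msupp B"
  "msupp (add_mset \<tau> A) = insert (tr_source \<tau>) (msupp A)"
  by (auto simp: msupp_def)

lemma msupp_mono: "A \<subseteq># B \<Longrightarrow> msupp A \<subseteq> msupp B"
  unfolding msupp_def msource_def by (meson image_mset_subseteq_mono set_mset_mono)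

lemma finite_msupp [simp]: "finite (msupp D)"
  by (simp add: msupp_def)

lemma size_mout_le:
  assumes "\<forall>\<tau>\<in>#D. size (tr_out \<tau>) \<le> 1"
  shows "size (mout D) \<le> size D"
  using assms by (induction D) (auto simp: mout_def)

lemma vnorm_le_size: "vnorm v \<le> size v"
  unfolding vnorm_def using count_le_size[of v] by simp

text \<open>\<open>derivation \<delta> p T X\<close>: X is the multiset of transitions of a derivation tree with
  root p whose unexpanded leaves are T.\<close>

inductive derivation :: "trans set \<Rightarrow> nat \<Rightarrow> nat multiset \<Rightarrow> trans multiset \<Rightarrow> bool"
  for \<delta> where
  leaf: "derivation \<delta> p {#p#} {#}"
| node0: "\<tau> \<in> \<delta> \<Longrightarrow> tr_source \<tau> = p \<Longrightarrow> tr_target \<tau> = {#} \<Longrightarrow> derivation \<delta> p {#} {#\<tau>#}"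
| node1: "\<tau> \<in> \<delta> \<Longrightarrow> tr_source \<tau> = p \<Longrightarrow> tr_target \<tau> = {#r#} \<Longrightarrow> derivation \<delta> r T X \<Longrightarrow>
    derivation \<delta> p T (add_mset \<tau> X)"
| node2: "\<tau> \<in> \<delta> \<Longrightarrow> tr_source \<tau> = p \<Longrightarrow> tr_target \<tau> = {#r1, r2#} \<Longrightarrow>
    derivation \<delta> r1 T1 X1 \<Longrightarrow> derivation \<delta> r2 T2 X2 \<Longrightarrow>
    derivation \<delta> p (T1 + T2) (add_mset \<tau> (X1 + X2))"

lemma derivation_balance: "derivation \<delta> p T X \<Longrightarrow> msource X + T = add_mset p (mtarget X)"
  by (induction rule: derivation.induct) (auto simp: add_ac)

lemma derivation_subset: "derivation \<delta> p T X \<Longrightarrow> set_mset X \<subseteq> \<delta>"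
  by (induction rule: derivation.induct) auto

lemma size_le_2_cases:
  assumes "size (T :: 'a multiset) \<le> 2"
  obtains "T = {#}" | r where "T = {#r#}" | r1 r2 where "T = {#r1, r2#}"
proof -
  consider "size T = 0" | "size T = 1" | "size T = 2" using assms by linarith
  then show thesis
  proof cases
    case 3
    then obtain r1 T' where "T = add_mset r1 T'" "size T' = 1"
      by (metis One_nat_def Suc_1 size_mset_SucE add_mset_add_single add.commute)
    then show thesis using that(3) by (metis size_1_singleton_mset)
  qed (use that size_1_singleton_mset[of T] in auto)
qed

lemma size_le_1_member: "size T \<le> 1 \<Longrightarrow> x \<in># T \<Longrightarrow> T = {#x#}"
  using size_1_singleton_mset[of T] by (cases "size T") auto

lemma derivation_singleton:
  assumes "\<tau> \<in> \<delta>" "size (tr_target \<tau>) \<le> 2"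
  shows "derivation \<delta> (tr_source \<tau>) (tr_target \<tau>) {#\<tau>#}"
  using assms(2)
proof (cases rule: size_le_2_cases)
  case (3 r1 r2)
  then show ?thesis using node2[OF assms(1) refl 3 leaf leaf] by (simp add: add_mset_commute)
qed (use assms node0 node1[OF assms(1) refl _ leaf] in auto)

lemma derivation_graft:
  "derivation \<delta> s T X \<Longrightarrow> p \<in># T \<Longrightarrow> derivation \<delta> p T' X' \<Longrightarrow>
   derivation \<delta> s (T - {#p#} + T') (X + X')"
proof (induction arbitrary: T' X' rule: derivation.induct)
  case (node1 \<tau> q r T X)
  then show ?case using derivation.node1[of \<tau> \<delta> q r "T - {#p#} + T'" "X + X'"] by simp
next
  case (node2 \<tau> q r1 r2 T1 X1 T2 X2)
  show ?case
  proof (cases "p \<in># T1")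
    case True
    then have "derivation \<delta> q ((T1 - {#p#} + T') + T2) (add_mset \<tau> ((X1 + X') + X2))"
      using node2 by (intro derivation.node2) auto
    then show ?thesis using True by (simp add: add_ac)
  next
    case False
    then have "p \<in># T2" using node2 by auto
    then have "derivation \<delta> q (T1 + (T2 - {#p#} + T')) (add_mset \<tau> (X1 + (X2 + X')))"
      using node2 by (intro derivation.node2) auto
    then show ?thesis using \<open>p \<in># T2\<close> by (simp add: add_ac)
  qed
qed auto

lemma derivation_subderivation:
  "derivation \<delta> r T X \<Longrightarrow> p \<in> msupp X \<Longrightarrow>
   \<exists>T' X'. derivation \<delta> p T' X' \<and> X' \<subseteq># X \<and> X' \<noteq> {#} \<and> T' \<subseteq># T"
proof (induction rule: derivation.induct)
  case (node0 \<tau> q)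
  then show ?case using derivation.node0[OF node0.hyps] by (intro exI[of _ "{#}"] exI[of _ "{#\<tau>#}"]) auto
next
  case (node1 \<tau> q r T X)
  show ?case
  proof (cases "p = q")
    case True
    then show ?thesis
      using derivation.node1[OF node1.hyps(1-4)] by (intro exI[of _ T] exI[of _ "add_mset \<tau> X"]) auto
  next
    case False
    then obtain T' X' where "derivation \<delta> p T' X'" "X' \<subseteq># X" "X' \<noteq> {#}" "T' \<subseteq># T"
      using node1 by auto
    moreover have "X \<subseteq># add_mset \<tau> X" by simp
    ultimately show ?thesis by (meson subset_mset.order_trans)
  qed
next
  case (node2 \<tau> q r1 r2 T1 X1 T2 X2)
  show ?case
  proof (cases "p = q")
    case True
    then show ?thesis using derivation.node2[OF node2.hyps(1-5)]
      by (intro exI[of _ "T1 + T2"] exI[of _ "add_mset \<tau> (X1 + X2)"]) auto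
  next
    case False
    then have "p \<in> msupp X1 \<or> p \<in> msupp X2" using node2.prems node2.hyps(2) by simp
    then obtain T' X' where "derivation \<delta> p T' X'" "X' \<subseteq># X1 + X2" "X' \<noteq> {#}" "T' \<subseteq># T1 + T2"
      using node2.IH by (meson mset_subset_eq_add_left mset_subset_eq_add_right subset_mset.order_trans)
    moreover have "X1 + X2 \<subseteq># add_mset \<tau> (X1 + X2)" by simp
    ultimately show ?thesis by (meson subset_mset.order_trans)
  qed
qed simp

lemma reachable_in_single: "\<tau> \<in># X \<Longrightarrow> t \<in># tr_target \<tau> \<Longrightarrow> reachable_in X (tr_source \<tau>) t"
  unfolding reachable_in_def by (intro exI[of _ "[\<tau>]"]) simp

lemma reachable_in_Cons:
  assumes "\<tau> \<in># X" "r \<in># tr_target \<tau>" "reachable_in X r t"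
  shows "reachable_in X (tr_source \<tau>) t"
proof -
  obtain \<tau>s where \<tau>s: "\<tau>s \<noteq> []" "set \<tau>s \<subseteq> set_mset X" "tr_source (hd \<tau>s) = r"
    "\<forall>i. Suc i < length \<tau>s \<longrightarrow> tr_source (\<tau>s ! Suc i) \<in># tr_target (\<tau>s ! i)"
    "t \<in># tr_target (last \<tau>s)"
    using assms(3) unfolding reachable_in_def by blast
  have "\<forall>i. Suc i < length (\<tau> # \<tau>s) \<longrightarrow> tr_source ((\<tau> # \<tau>s) ! Suc i) \<in># tr_target ((\<tau> # \<tau>s) ! i)"
    using \<tau>s assms(2) by (auto simp: hd_conv_nth nth_Cons split: nat.split)
  then show ?thesis
    unfolding reachable_in_def using \<tau>s assms(1) by (intro exI[of _ "\<tau> # \<tau>s"]) auto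
qed

lemma reachable_in_mono: "reachable_in X p t \<Longrightarrow> set_mset X \<subseteq> set_mset Y \<Longrightarrow> reachable_in Y p t"
  unfolding reachable_in_def by blast

lemma derivation_reachable:
  "derivation \<delta> p T X \<Longrightarrow> t \<in> msupp X \<Longrightarrow> t = p \<or> reachable_in X p t"
proof (induction rule: derivation.induct)
  case (node1 \<tau> p r T X)
  let ?W = "add_mset \<tau> X"
  have "reachable_in ?W p r" using reachable_in_single[of \<tau> ?W r] node1.hyps(2,3) by simp
  moreover have "reachable_in X r t \<Longrightarrow> reachable_in ?W p t"
    using reachable_in_Cons[of \<tau> ?W r t] reachable_in_mono[of X r t ?W] node1.hyps(2,3) by auto
  ultimately show ?case using node1 by auto
next
  case (node2 \<tau> p r1 r2 T1 X1 T2 X2)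
  let ?W = "add_mset \<tau> (X1 + X2)"
  have "reachable_in ?W p r1" "reachable_in ?W p r2"
    using reachable_in_single[of \<tau> ?W] node2.hyps(2,3) by simp_all
  moreover have "reachable_in X1 r1 t \<Longrightarrow> reachable_in ?W p t"
    using reachable_in_Cons[of \<tau> ?W r1 t] reachable_in_mono[of X1 r1 t ?W] node2.hyps(2,3) by auto
  moreover have "reachable_in X2 r2 t \<Longrightarrow> reachable_in ?W p t"
    using reachable_in_Cons[of \<tau> ?W r2 t] reachable_in_mono[of X2 r2 t ?W] node2.hyps(2,3) by auto
  ultimately show ?case using node2 by auto
qed auto

lemma derivation_loop_balanced: "derivation \<delta> p {#p#} X \<Longrightarrow> balanced X"
  using derivation_balance[of \<delta> p "{#p#}" X] by (simp add: add.commute)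

lemma derivation_is_cycle:
  assumes "derivation \<delta> p {#p#} X"
  shows "is_cycle \<delta> X"
proof -
  have "connected_from X p"
    unfolding connected_from_def using derivation_reachable[OF assms] by blast
  then show ?thesis
    unfolding is_cycle_def using derivation_subset[OF assms] derivation_loop_balanced[OF assms] by blast
qed

lemma derivation_root_in_msupp: "derivation \<delta> p T X \<Longrightarrow> X \<noteq> {#} \<Longrightarrow> p \<in> msupp X"
  by (induction rule: derivation.induct) auto

definition no_proper_balanced_sub :: "trans multiset \<Rightarrow> bool" where
  "no_proper_balanced_sub W \<longleftrightarrow> (\<forall>Y. Y \<subseteq># W \<longrightarrow> Y \<noteq> {#} \<longrightarrow> Y \<noteq> W \<longrightarrow> \<not> balanced Y)"

lemma no_proper_balanced_sub_mono:
  "no_proper_balanced_sub W \<Longrightarrow> Y \<subseteq># W \<Longrightarrow> no_proper_balanced_sub Y"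
  unfolding no_proper_balanced_sub_def using subset_mset.order_trans subset_mset.antisym by blast

text \<open>Two derivations with the same root and leaves differ by a balanced multiset.\<close>

lemma derivation_unique_in_no_proper_balanced_sub:
  assumes W: "no_proper_balanced_sub W" "derivation \<delta> p T W"
    and W': "derivation \<delta> p T W'" "W' \<subseteq># W" "W' \<noteq> {#}"
  shows "W' = W"
proof (rule ccontr)
  assume "W' \<noteq> W"
  obtain Y where Y: "W = W' + Y" using W'(2) by (metis subset_mset.add_diff_inverse)
  then have "(msource W' + T) + msource Y = add_mset p (mtarget W') + mtarget Y"
    using derivation_balance[OF W(2)] by (simp add: add_ac)
  then have "balanced Y" using derivation_balance[OF W'(1)] by simp
  moreover have "Y \<noteq> {#}" "Y \<noteq> W" using Y \<open>W' \<noteq> W\<close> W'(3) by auto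
  ultimately show False using W(1) Y unfolding no_proper_balanced_sub_def by simp
qed

lemma leafless_root_notin_msupp:
  assumes W: "no_proper_balanced_sub W" "derivation \<delta> p {#} W"
    and X: "derivation \<delta> r {#} X" "X \<subseteq># W" "size X < size W"
  shows "p \<notin> msupp X"
proof
  assume "p \<in> msupp X"
  then obtain X' where X': "derivation \<delta> p {#} X'" "X' \<subseteq># X" "X' \<noteq> {#}"
    using derivation_subderivation[OF X(1)] by auto
  then have "X' = W"
    using derivation_unique_in_no_proper_balanced_sub[OF W] subset_mset.order_trans X(2) by blast
  then show False using size_mset_mono[OF X'(2)] X(3) by simp
qed

lemma leafless_derivation_size:
  "derivation \<delta> p T X \<Longrightarrow> T = {#} \<Longrightarrow> no_proper_balanced_sub X \<Longrightarrow>
   size X < 2 ^ card (msupp X)"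
proof (induction rule: derivation.induct)
  case (node1 \<tau> p r T X)
  have W: "derivation \<delta> p {#} (add_mset \<tau> X)" using derivation.node1[OF node1.hyps] node1.prems by simp
  have X: "no_proper_balanced_sub X"
    using no_proper_balanced_sub_mono[OF node1.prems(2)] by simp
  have "p \<notin> msupp X"
    using leafless_root_notin_msupp[OF node1.prems(2) W] node1.hyps(4) node1.prems(1)
    by simp
  then show ?case using node1 X by simp
next
  case (node2 \<tau> p r1 r2 T1 X1 T2 X2)
  let ?W = "add_mset \<tau> (X1 + X2)"
  have W: "derivation \<delta> p {#} ?W" using derivation.node2[OF node2.hyps] node2.prems by simp
  have sub: "X1 \<subseteq># ?W" "X2 \<subseteq># ?W" by simp_all
  have X: "no_proper_balanced_sub X1" "no_proper_balanced_sub X2"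
    using no_proper_balanced_sub_mono[OF node2.prems(2) sub(1)]
      no_proper_balanced_sub_mono[OF node2.prems(2) sub(2)] by simp_all
  have "p \<notin> msupp X1" "p \<notin> msupp X2"
    using leafless_root_notin_msupp[OF node2.prems(2) W] node2.hyps(4,5) node2.prems(1) sub by auto
  then have card: "card (msupp ?W) = Suc (card (msupp X1 \<union> msupp X2))"
    using node2.hyps(2) by simp
  have "(2::nat) ^ card (msupp X1) \<le> 2 ^ card (msupp X1 \<union> msupp X2)"
    "(2::nat) ^ card (msupp X2) \<le> 2 ^ card (msupp X1 \<union> msupp X2)"
    by (intro power_increasing card_mono; simp)+
  then have "size X1 < 2 ^ card (msupp X1 \<union> msupp X2)" "size X2 < 2 ^ card (msupp X1 \<union> msupp X2)"
    using node2.IH node2.prems(1) X by (simp_all add: less_le_trans)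
  then show ?case unfolding card by simp
qed auto

text \<open>For a derivation with the single leaf q, the states on the path from the root to q.\<close>

definition spine :: "trans set \<Rightarrow> nat \<Rightarrow> trans multiset \<Rightarrow> nat set" where
  "spine \<delta> q X = {r. \<exists>X'. X' \<subseteq># X \<and> X' \<noteq> {#} \<and> derivation \<delta> r {#q#} X'}"

lemma spine_subset_msupp: "spine \<delta> q X \<subseteq> msupp X"
  unfolding spine_def using derivation_root_in_msupp msupp_mono by blast

lemma finite_spine: "finite (spine \<delta> q X)"
  using finite_subset[OF spine_subset_msupp finite_msupp] .

lemma spine_mono: "X \<subseteq># W \<Longrightarrow> spine \<delta> q X \<subseteq> spine \<delta> q W"
  unfolding spine_def using subset_mset.order_trans by blast

lemma unary_derivation_size_step:
  assumes W: "no_proper_balanced_sub W" "derivation \<delta> p {#q#} W" "W = add_mset \<tau> (Xs + Xo)"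
    and Xs: "size Xs \<le> card (spine \<delta> q Xs) * 2 ^ n" and Xo: "size Xo < 2 ^ n"
  shows "size W \<le> card (spine \<delta> q W) * 2 ^ n"
proof -
  have "p \<notin> spine \<delta> q Xs"
  proof
    assume "p \<in> spine \<delta> q Xs"
    then obtain X' where X': "X' \<subseteq># Xs" "X' \<noteq> {#}" "derivation \<delta> p {#q#} X'"
      unfolding spine_def by blast
    have "Xs \<subseteq># W" using W(3) by simp
    then have "X' = W"
      using derivation_unique_in_no_proper_balanced_sub[OF W(1,2) X'(3)] X'(1,2)
      by (meson subset_mset.order_trans)
    then show False using size_mset_mono[OF X'(1)] W(3) by simp
  qed
  moreover have "p \<in> spine \<delta> q W"
    unfolding spine_def using W(2,3) by (intro CollectI exI[of _ W]) simp
  moreover have "spine \<delta> q Xs \<subseteq> spine \<delta> q W"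
    using W(3) by (intro spine_mono) simp
  ultimately have "insert p (spine \<delta> q Xs) \<subseteq> spine \<delta> q W" "p \<notin> spine \<delta> q Xs" by auto
  then have "Suc (card (spine \<delta> q Xs)) \<le> card (spine \<delta> q W)"
    using finite_spine card_mono[OF finite_spine] by (metis card_insert_disjoint)
  then have "Suc (card (spine \<delta> q Xs)) * 2 ^ n \<le> card (spine \<delta> q W) * 2 ^ n"
    by (rule mult_le_mono1)
  moreover have "size W \<le> Suc (card (spine \<delta> q Xs)) * 2 ^ n" using W(3) Xs Xo by simp
  ultimately show ?thesis by linarith
qed

lemma unary_derivation_size:
  "derivation \<delta> p T X \<Longrightarrow> T = {#q#} \<Longrightarrow> no_proper_balanced_sub X \<Longrightarrow> msupp X \<subseteq> S \<Longrightarrow>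
   finite S \<Longrightarrow> size X \<le> card (spine \<delta> q X) * 2 ^ card S"
proof (induction rule: derivation.induct)
  case (node1 \<tau> p r T X)
  have W: "derivation \<delta> p {#q#} (add_mset \<tau> (X + {#}))"
    using derivation.node1[OF node1.hyps] node1.prems(1) by simp
  have "size X \<le> card (spine \<delta> q X) * 2 ^ card S"
    using node1 no_proper_balanced_sub_mono[OF node1.prems(2)] by simp
  then show ?case using unary_derivation_size_step[OF _ W refl] node1.prems(2) by simp
next
  case (node2 \<tau> p r1 r2 T1 X1 T2 X2)
  let ?W = "add_mset \<tau> (X1 + X2)"
  have W: "derivation \<delta> p {#q#} ?W" using derivation.node2[OF node2.hyps] node2.prems(1) by simp
  have sub: "X1 \<subseteq># ?W" "X2 \<subseteq># ?W" by simp_all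
  have X: "no_proper_balanced_sub X1" "no_proper_balanced_sub X2"
    using no_proper_balanced_sub_mono[OF node2.prems(2)] sub by simp_all
  have leafless: "size X < 2 ^ card S" if "derivation \<delta> r {#} X" "no_proper_balanced_sub X"
    "msupp X \<subseteq> S" for r X
    using leafless_derivation_size[OF that(1) refl that(2)] card_mono[OF node2.prems(4) that(3)]
    by (meson less_le_trans one_le_numeral power_increasing)
  from node2.prems(1) consider "T1 = {#q#}" "T2 = {#}" | "T1 = {#}" "T2 = {#q#}"
    by (metis union_is_single)
  then obtain Xs Xo where "X1 + X2 = Xs + Xo" "size Xs \<le> card (spine \<delta> q Xs) * 2 ^ card S"
    "size Xo < 2 ^ card S"
  proof cases
    case 1
    then show thesis using that[of X1 X2] node2 X leafless[of r2 X2] by simp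
  next
    case 2
    then show thesis using that[of X2 X1] node2 X leafless[of r1 X1] by (simp add: add.commute)
  qed
  then show ?case using unary_derivation_size_step[OF node2.prems(2) W] by simp
qed auto

text \<open>A partial derivation \<open>(p, T, X)\<close> packs a nonempty derivation with root p and at most
  two unexpanded leaves T. Multisets of them interpolate between multisets of transitions (each
  transition is a partial derivation by itself) and single derivations, obtained by grafting.\<close>

type_synonym partial_derivation = "nat \<times> nat multiset \<times> trans multiset"

definition pd_valid :: "trans set \<Rightarrow> partial_derivation \<Rightarrow> bool" where
  "pd_valid \<delta> m \<longleftrightarrow>
     derivation \<delta> (fst m) (fst (snd m)) (snd (snd m)) \<and> snd (snd m) \<noteq> {#} \<and> size (fst (snd m)) \<le> 2"

definition pd_roots :: "partial_derivation multiset \<Rightarrow> nat multiset" where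
  "pd_roots M = image_mset fst M"

definition pd_leaves :: "partial_derivation multiset \<Rightarrow> nat multiset" where
  "pd_leaves M = (\<Sum>m\<in>#M. fst (snd m))"

definition pd_trans :: "partial_derivation multiset \<Rightarrow> trans multiset" where
  "pd_trans M = (\<Sum>m\<in>#M. snd (snd m))"

lemma pd_simps [simp]:
  "pd_roots {#} = {#}" "pd_roots (add_mset m M) = add_mset (fst m) (pd_roots M)"
  "pd_leaves {#} = {#}" "pd_leaves (add_mset m M) = fst (snd m) + pd_leaves M"
  "pd_trans {#} = {#}" "pd_trans (add_mset m M) = snd (snd m) + pd_trans M"
  "pd_roots (M + N) = pd_roots M + pd_roots N" "pd_leaves (M + N) = pd_leaves M + pd_leaves N"
  by (auto simp: pd_roots_def pd_leaves_def pd_trans_def)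

lemma size_pd_roots [simp]: "size (pd_roots M) = size M"
  by (simp add: pd_roots_def)

lemma pd_trans_member: "m \<in># M \<Longrightarrow> snd (snd m) \<subseteq># pd_trans M"
  by (metis mset_subset_eq_add_left multi_member_split pd_simps(6))

lemma pd_graft:
  assumes valid: "\<forall>m\<in>#M. pd_valid \<delta> m"
    and m0: "m0 \<in># M" "size (fst (snd m0)) \<le> 1" "fst m0 \<notin># fst (snd m0)" "fst m0 \<in># pd_leaves M"
  obtains M' where "\<forall>m\<in>#M'. pd_valid \<delta> m" "size M' < size M" "M' \<noteq> {#}"
    "pd_roots M = add_mset (fst m0) (pd_roots M')" "pd_leaves M = add_mset (fst m0) (pd_leaves M')"
    "pd_trans M' = pd_trans M"
proof -
  obtain p T0 X0 where m0_eq: "m0 = (p, T0, X0)" by (cases m0) blast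
  obtain M1 where M1: "M = add_mset m0 M1" using multi_member_split[OF m0(1)] by blast
  have "p \<in># pd_leaves M1" using m0(3,4) unfolding M1 m0_eq by simp
  then obtain m1 where m1: "m1 \<in># M1" "p \<in># fst (snd m1)"
    unfolding pd_leaves_def by auto
  obtain s1 T1 X1 where m1_eq: "m1 = (s1, T1, X1)" by (cases m1) blast
  obtain M2 where M2: "M1 = add_mset m1 M2" using multi_member_split[OF m1(1)] by blast
  have v0: "derivation \<delta> p T0 X0" "size T0 \<le> 1"
    using valid m0(2) unfolding M1 m0_eq pd_valid_def by auto
  have v1: "derivation \<delta> s1 T1 X1" "X1 \<noteq> {#}" "size T1 \<le> 2"
    using valid unfolding M1 M2 m1_eq pd_valid_def by auto
  have "p \<in># T1" using m1(2) m1_eq by simp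
  then have pT1: "T1 = add_mset p (T1 - {#p#})" by simp
  define M' where "M' = add_mset (s1, T1 - {#p#} + T0, X1 + X0) M2"
  have "size (T1 - {#p#} + T0) \<le> 2" 
    using v0(2) v1(3) arg_cong[OF pT1, of size] by simp
  then have "\<forall>m\<in>#M'. pd_valid \<delta> m"
    using valid derivation_graft[OF v1(1) \<open>p \<in># T1\<close> v0(1)] v1(2)
    unfolding M'_def M1 M2 pd_valid_def by auto
  moreover have "pd_leaves M = add_mset p (pd_leaves M')"
    unfolding M1 M2 M'_def m0_eq m1_eq by (subst pT1) (simp add: add_ac)
  ultimately show thesis
    using that[of M'] unfolding M'_def M1 M2 m0_eq m1_eq by (simp add: add_ac)
qed

lemma pd_ungraftable_single:
  assumes le2: "\<forall>m\<in>#M. size (fst (snd m)) \<le> 2"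
    and roots_free: "\<forall>m\<in>#M. size (fst (snd m)) \<le> 1 \<longrightarrow> fst m \<notin># pd_leaves M"
    and bal: "pd_roots M = pd_leaves M + Z" and Z: "Z = {#} \<and> M \<noteq> {#} \<or> Z = {#s0#}"
  shows "Z = {#s0#} \<and> (\<exists>X. M = {#(s0, {#}, X)#})"
proof -
  define M1 where "M1 = filter_mset (\<lambda>m. size (fst (snd m)) \<le> 1) M"
  define M2 where "M2 = filter_mset (\<lambda>m. \<not> size (fst (snd m)) \<le> 1) M"
  have M: "M = M1 + M2" unfolding M1_def M2_def by simp
  have "pd_roots M1 \<subseteq># Z"
  proof (rule mset_subset_eqI)
    fix r
    show "count (pd_roots M1) r \<le> count Z r"
    proof (cases "r \<in># pd_roots M1")
      case True
      then have "r \<notin># pd_leaves M" using roots_free unfolding M1_def pd_roots_def by auto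
      then have "count (pd_roots M) r = count Z r" using bal by (simp add: not_in_iff)
      then show ?thesis unfolding M by simp
    qed (simp add: not_in_iff)
  qed
  then have M1_Z: "size M1 \<le> size Z" using size_mset_mono by force
  have "size (pd_leaves M2) = 2 * size M2"
    using le2 unfolding M2_def by (induction M) auto
  moreover have "size (pd_leaves M) = size (pd_leaves M1) + size (pd_leaves M2)"
    by (subst M) simp
  moreover have "size M = size (pd_leaves M) + size Z" using arg_cong[OF bal, of size] by simp
  moreover have "size M = size M1 + size M2" by (subst M) simp
  ultimately have "size M2 = 0" "size (pd_leaves M) = 0" "size M = size Z" using M1_Z by linarith+
  then have "M2 = {#}" "pd_leaves M = {#}" "size M = size Z" by auto
  moreover have "Z = {#s0#}" using Z \<open>size M = size Z\<close> by auto
  ultimately obtain m where "M = {#m#}" using size_1_singleton_mset[of M] by auto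
  then show ?thesis using bal \<open>pd_leaves M = {#}\<close> \<open>Z = {#s0#}\<close> by (cases m) auto
qed

text \<open>Repeatedly graft a partial derivation with at most one leaf onto a leaf labelled with its
  root. When this is no longer possible, a counting argument on roots versus leaves shows that
  only a single leafless derivation from s0 remains.\<close>

lemma pd_glue:
  assumes "\<forall>m\<in>#M. pd_valid \<delta> m" "pd_roots M = pd_leaves M + Z" "Z = {#} \<and> M \<noteq> {#} \<or> Z = {#s0#}"
  shows "(\<exists>p X. derivation \<delta> p {#p#} X \<and> X \<noteq> {#} \<and> X \<subseteq># pd_trans M) \<or>
    (Z = {#s0#} \<and> derivation \<delta> s0 {#} (pd_trans M))"
  using assms
proof (induction "size M" arbitrary: M rule: less_induct)
  case less
  show ?case
  proof (cases "\<exists>m\<in>#M. fst (snd m) = {#fst m#}")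
    case True
    then obtain m where m: "m \<in># M" "fst (snd m) = {#fst m#}" by blast
    then have "derivation \<delta> (fst m) {#fst m#} (snd (snd m))" "snd (snd m) \<noteq> {#}"
      using less.prems(1) unfolding pd_valid_def by auto
    then show ?thesis using pd_trans_member[OF m(1)] by blast
  next
    case no_loop: False
    show ?thesis
    proof (cases "\<exists>m\<in>#M. size (fst (snd m)) \<le> 1 \<and> fst m \<in># pd_leaves M")
      case True
      then obtain m0 where m0: "m0 \<in># M" "size (fst (snd m0)) \<le> 1" "fst m0 \<in># pd_leaves M"
        by blast
      have "fst m0 \<notin># fst (snd m0)" using size_le_1_member[OF m0(2)] no_loop m0(1) by metis
      then obtain M' where M': "\<forall>m\<in>#M'. pd_valid \<delta> m" "size M' < size M" "M' \<noteq> {#}"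
        "pd_roots M = add_mset (fst m0) (pd_roots M')" "pd_leaves M = add_mset (fst m0) (pd_leaves M')"
        "pd_trans M' = pd_trans M"
        by (rule pd_graft[OF less.prems(1) m0(1,2) _ m0(3)])
      have "pd_roots M' = pd_leaves M' + Z" using less.prems(2) M'(4,5) by simp
      then show ?thesis using less.hyps[OF M'(2,1)] less.prems(3) M'(3,6) by auto
    next
      case False
      then obtain X where "Z = {#s0#}" "M = {#(s0, {#}, X)#}"
        using pd_ungraftable_single[OF _ _ less.prems(2,3)] less.prems(1) unfolding pd_valid_def by blast
      then show ?thesis using less.prems(1) unfolding pd_valid_def by simp
    qed
  qed
qed

definition pd_of_trans :: "trans multiset \<Rightarrow> partial_derivation multiset" where
  "pd_of_trans D = image_mset (\<lambda>\<tau>. (tr_source \<tau>, tr_target \<tau>, {#\<tau>#})) D"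

lemma pd_of_trans_simps [simp]:
  "pd_roots (pd_of_trans D) = msource D" "pd_leaves (pd_of_trans D) = mtarget D"
  "pd_trans (pd_of_trans D) = D" "pd_of_trans D = {#} \<longleftrightarrow> D = {#}"
  by (induction D) (auto simp: pd_of_trans_def)

lemma pd_of_trans_valid:
  assumes "set_mset D \<subseteq> \<delta>" "\<forall>\<tau>\<in>#D. size (tr_target \<tau>) \<le> 2"
  shows "\<forall>m\<in>#pd_of_trans D. pd_valid \<delta> m"
  using assms derivation_singleton unfolding pd_of_trans_def pd_valid_def by auto

lemma balanced_contains_derivation_cycle:
  assumes "set_mset Y \<subseteq> \<delta>" "\<forall>\<tau>\<in>#Y. size (tr_target \<tau>) \<le> 2" "Y \<noteq> {#}" "balanced Y"
  shows "\<exists>p X. derivation \<delta> p {#p#} X \<and> X \<noteq> {#} \<and> X \<subseteq># Y"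
  using pd_glue[OF pd_of_trans_valid[OF assms(1,2)], of "{#}"] assms(3,4)
  by simp

lemma run_is_derivation_or_contains_cycle:
  assumes "set_mset R \<subseteq> \<delta>" "\<forall>\<tau>\<in>#R. size (tr_target \<tau>) \<le> 2"
    "msource R = mtarget R + {#s0#}"
  shows "(\<exists>p X. derivation \<delta> p {#p#} X \<and> X \<noteq> {#} \<and> X \<subseteq># R) \<or> derivation \<delta> s0 {#} R"
  using pd_glue[OF pd_of_trans_valid[OF assms(1,2)], of "{#s0#}" s0] assms(3)
  by simp

lemma obtain_minimal_balanced:
  assumes "Y \<noteq> {#}" "balanced Y"
  obtains C where "C \<subseteq># Y" "C \<noteq> {#}" "balanced C"
    "\<And>C'. C' \<subseteq># C \<Longrightarrow> C' \<noteq> {#} \<Longrightarrow> balanced C' \<Longrightarrow> C' = C"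
proof -
  let ?P = "\<lambda>C. C \<subseteq># Y \<and> C \<noteq> {#} \<and> balanced C"
  obtain C where C: "?P C" and min: "\<And>C'. ?P C' \<Longrightarrow> size C \<le> size C'"
    using ex_has_least_nat[of ?P Y size] assms by auto
  have "C' = C" if "C' \<subseteq># C" "C' \<noteq> {#}" "balanced C'" for C'
    using that C min[of C'] mset_subset_size[of C' C] subset_mset.order_trans
    by (metis not_less subset_mset.le_imp_less_or_eq)
  with C that show thesis by blast
qed

definition binary_on :: "nat set \<Rightarrow> trans set \<Rightarrow> bool" where
  "binary_on S \<delta> \<longleftrightarrow>
     (\<forall>\<tau>\<in>\<delta>. tr_source \<tau> \<in> S \<and> set_mset (tr_target \<tau>) \<subseteq> S \<and> size (tr_target \<tau>) \<le> 2)"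

lemma comm_grammar_binary_on: "comm_grammar \<Sigma> S s0 \<delta> \<Longrightarrow> binary_on S \<delta>"
  unfolding comm_grammar_def binary_on_def by blast

lemma binary_on_msupp: "binary_on S \<delta> \<Longrightarrow> set_mset D \<subseteq> \<delta> \<Longrightarrow> msupp D \<subseteq> S"
  unfolding binary_on_def msupp_def msource_def by auto

lemma balanced_contains_small_cycle:
  assumes \<delta>: "binary_on S \<delta>" "finite S"
    and Y: "set_mset Y \<subseteq> \<delta>" "Y \<noteq> {#}" "balanced Y"
  shows "\<exists>C. C \<subseteq># Y \<and> C \<noteq> {#} \<and> is_cycle \<delta> C \<and> size C \<le> card S * 2 ^ card S"
proof -
  obtain C where C: "C \<subseteq># Y" "C \<noteq> {#}" "balanced C"
    and min: "\<And>C'. C' \<subseteq># C \<Longrightarrow> C' \<noteq> {#} \<Longrightarrow> balanced C' \<Longrightarrow> C' = C"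
    using obtain_minimal_balanced[OF Y(2,3)] by blast
  have C_\<delta>: "set_mset C \<subseteq> \<delta>" using C(1) Y(1) by (meson set_mset_mono subset_trans)
  then obtain p X where X: "derivation \<delta> p {#p#} X" "X \<noteq> {#}" "X \<subseteq># C"
    using balanced_contains_derivation_cycle[OF _ _ C(2,3)] \<delta>(1) unfolding binary_on_def by blast
  have "X = C" using derivation_loop_balanced[OF X(1)] min X(2,3) by blast
  have "no_proper_balanced_sub C" using min unfolding no_proper_balanced_sub_def by blast
  then have "size C \<le> card (spine \<delta> p C) * 2 ^ card S"
    using unary_derivation_size[OF X(1)[unfolded \<open>X = C\<close>] refl] binary_on_msupp[OF \<delta>(1) C_\<delta>] \<delta>(2)
    by blast
  also have "\<dots> \<le> card S * 2 ^ card S"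
    using spine_subset_msupp binary_on_msupp[OF \<delta>(1) C_\<delta>] \<delta>(2) by (meson card_mono mult_le_mono1 order_trans)
  finally show ?thesis using C derivation_is_cycle X(1) \<open>X = C\<close> by blast
qed

definition no_balanced_sub :: "trans multiset \<Rightarrow> bool" where
  "no_balanced_sub R \<longleftrightarrow> (\<forall>Y. Y \<subseteq># R \<longrightarrow> Y \<noteq> {#} \<longrightarrow> \<not> balanced Y)"

lemma no_balanced_sub_run_size:
  assumes \<delta>: "binary_on S \<delta>" "finite S"
    and R: "set_mset R \<subseteq> \<delta>" "msource R = mtarget R + {#s0#}" "no_balanced_sub R"
  shows "size R < 2 ^ card S"
proof -
  have "\<forall>\<tau>\<in>#R. size (tr_target \<tau>) \<le> 2" using R(1) \<delta>(1) unfolding binary_on_def by blast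
  moreover have "\<not> (derivation \<delta> p {#p#} X \<and> X \<noteq> {#} \<and> X \<subseteq># R)" for p X
    using R(3) derivation_loop_balanced unfolding no_balanced_sub_def by blast
  ultimately have "derivation \<delta> s0 {#} R"
    using run_is_derivation_or_contains_cycle[OF R(1) _ R(2)] by blast
  moreover have "no_proper_balanced_sub R"
    using R(3) unfolding no_balanced_sub_def no_proper_balanced_sub_def by blast
  ultimately have "size R < 2 ^ card (msupp R)" using leafless_derivation_size by blast
  also have "\<dots> \<le> 2 ^ card S"
    using binary_on_msupp[OF \<delta>(1) R(1)] \<delta>(2) by (simp add: card_mono)
  finally show ?thesis .
qed

lemma decompose_small_cycles:
  assumes \<delta>: "binary_on S \<delta>" "finite S" and D: "set_mset D \<subseteq> \<delta>"
  obtains R Cs where "D = R + \<Sum>\<^sub># Cs" "no_balanced_sub R"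
    "\<forall>C\<in>#Cs. C \<noteq> {#} \<and> is_cycle \<delta> C \<and> size C \<le> card S * 2 ^ card S"
  using D
proof (induction "size D" arbitrary: D thesis rule: less_induct)
  case less
  show ?case
  proof (cases "no_balanced_sub D")
    case True
    then show ?thesis using less.prems(1)[of D "{#}"] by simp
  next
    case False
    then obtain Y where "Y \<subseteq># D" "Y \<noteq> {#}" "balanced Y" unfolding no_balanced_sub_def by blast
    then obtain C where C: "C \<subseteq># D" "C \<noteq> {#}" "is_cycle \<delta> C" "size C \<le> card S * 2 ^ card S"
      using balanced_contains_small_cycle[OF \<delta>] less.prems(2)
      by (meson set_mset_mono subset_mset.order_trans subset_trans)
    have "size (D - C) < size D"
      using size_Diff_submset[OF C(1)] size_mset_mono[OF C(1)] C(2) nonempty_has_size[of C]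
      by linarith
    moreover have "set_mset (D - C) \<subseteq> \<delta>" using less.prems(2) by (meson in_diffD subset_iff)
    ultimately obtain R Cs where "D - C = R + \<Sum>\<^sub># Cs" "no_balanced_sub R"
      "\<forall>C\<in>#Cs. C \<noteq> {#} \<and> is_cycle \<delta> C \<and> size C \<le> card S * 2 ^ card S"
      using less.hyps by blast
    moreover have "D = R + \<Sum>\<^sub># (add_mset C Cs)"
      using subset_mset.diff_add[OF C(1)] calculation(1) by (simp add: add_ac)
    ultimately show ?thesis using less.prems(1)[of R "add_mset C Cs"] C(2-4) by auto
  qed
qed

lemma balanced_sum_cycles: "\<forall>C\<in>#Cs. is_cycle \<delta> C \<Longrightarrow> balanced (\<Sum>\<^sub># Cs)"
  by (induction Cs) (auto simp: is_cycle_def)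

lemma simple_cycle_size:
  assumes \<delta>: "binary_on S \<delta>" "finite S" and D: "simple_cycle \<delta> D"
  shows "size D \<le> card S * 2 ^ card S"
proof -
  have "D \<noteq> {#}" "set_mset D \<subseteq> \<delta>" "balanced D"
    using D unfolding simple_cycle_def is_cycle_def by auto
  then obtain R Cs where RCs: "D = R + \<Sum>\<^sub># Cs" "no_balanced_sub R"
    and Cs: "\<forall>C\<in>#Cs. C \<noteq> {#} \<and> is_cycle \<delta> C \<and> size C \<le> card S * 2 ^ card S"
    using decompose_small_cycles[OF \<delta>] by metis
  have "balanced R" using \<open>balanced D\<close> balanced_sum_cycles[of Cs \<delta>] Cs RCs(1) by simp
  then have "R = {#}" using RCs(2) unfolding no_balanced_sub_def by blast
  obtain Cl where Cl: "mset Cl = Cs" using ex_mset by blast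
  have "\<not> 2 \<le> length Cl"
    using D Cs RCs(1) \<open>R = {#}\<close> Cl unfolding simple_cycle_def
    by (metis sum_mset_sum_list add_0 in_multiset_in_set)
  moreover have "Cl \<noteq> []" using \<open>D \<noteq> {#}\<close> RCs(1) \<open>R = {#}\<close> Cl by auto
  ultimately have "size Cs = 1" using Cl by (cases Cl) (auto simp: Suc_le_eq)
  then obtain C where "Cs = {#C#}" using size_1_singleton_mset by blast
  then show ?thesis using Cs RCs(1) \<open>R = {#}\<close> by simp
qed

definition shape :: "trans \<Rightarrow> nat \<times> nat multiset" where
  "shape \<tau> = (tr_source \<tau>, tr_target \<tau>)"

lemma reachable_in_shape_transfer:
  assumes shapes: "shape ` set_mset D \<subseteq> shape ` set_mset D'" and reach: "reachable_in D p t"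
  shows "reachable_in D' p t"
proof -
  have "\<exists>\<tau>'. \<tau>' \<in># D' \<and> shape \<tau>' = shape \<tau>" if "\<tau> \<in># D" for \<tau>
  proof -
    have "shape \<tau> \<in> shape ` set_mset D'" using shapes that by (rule subsetD[OF _ imageI])
    then show ?thesis by (metis imageE)
  qed
  then have "\<exists>f. \<forall>\<tau>\<in>#D. f \<tau> \<in># D' \<and> shape (f \<tau>) = shape \<tau>" by (intro bchoice ballI)
  then obtain f where f: "\<forall>\<tau>\<in>#D. f \<tau> \<in># D' \<and> shape (f \<tau>) = shape \<tau>" by blast
  then have f_simps: "tr_source (f \<tau>) = tr_source \<tau>" "tr_target (f \<tau>) = tr_target \<tau>" if "\<tau> \<in># D" for \<tau>
    using that unfolding shape_def by simp_all
  obtain \<tau>s where \<tau>s: "\<tau>s \<noteq> []" "set \<tau>s \<subseteq> set_mset D" "tr_source (hd \<tau>s) = p"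
    "\<forall>i. Suc i < length \<tau>s \<longrightarrow> tr_source (\<tau>s ! Suc i) \<in># tr_target (\<tau>s ! i)"
    "t \<in># tr_target (last \<tau>s)"
    using reach unfolding reachable_in_def by blast
  have "\<forall>i. Suc i < length (map f \<tau>s) \<longrightarrow>
      tr_source (map f \<tau>s ! Suc i) \<in># tr_target (map f \<tau>s ! i)"
  proof (intro allI impI)
    fix i assume i: "Suc i < length (map f \<tau>s)"
    then have "\<tau>s ! Suc i \<in># D" "\<tau>s ! i \<in># D" using \<tau>s(2) nth_mem[of "Suc i" \<tau>s] nth_mem[of i \<tau>s] by auto
    then show "tr_source (map f \<tau>s ! Suc i) \<in># tr_target (map f \<tau>s ! i)"
      using \<tau>s(4) i f_simps by simp
  qed
  moreover have "hd \<tau>s \<in># D" "last \<tau>s \<in># D" using \<tau>s(1,2) by auto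
  ultimately show ?thesis
    unfolding reachable_in_def using \<tau>s f f_simps
    by (intro exI[of _ "map f \<tau>s"]) (auto simp: hd_map last_map)
qed

lemma run_shape_transfer:
  assumes D: "is_run \<delta> s0 D" and D': "D' \<subseteq># D" "msource D' = mtarget D' + {#s0#}"
    and shapes: "shape ` set_mset D \<subseteq> shape ` set_mset D'"
  shows "is_run \<delta> s0 D'" "msupp D' = msupp D"
proof -
  show supp: "msupp D' = msupp D"
    using msupp_mono[OF D'(1)] shapes unfolding msupp_def msource_def shape_def by force
  have "set_mset D' \<subseteq> \<delta>" using D D'(1) unfolding is_run_def by (meson mset_subset_eqD subsetD subsetI)
  moreover have "connected_from D' s0"
    using D reachable_in_shape_transfer[OF shapes] unfolding is_run_def connected_from_def supp by blast
  ultimately show "is_run \<delta> s0 D'" using D'(2) unfolding is_run_def by blast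
qed

lemma size_le_card_Union_if_private:
  assumes "\<forall>C\<in>#Cs. finite (g C)"
    and "\<forall>C\<in>#Cs. \<exists>x\<in>g C. \<forall>C'\<in>#Cs - {#C#}. x \<notin> g C'"
  shows "size Cs \<le> card (\<Union>C\<in>set_mset Cs. g C)"
  using assms
proof (induction Cs)
  case (add C Cs)
  let ?U = "\<Union>C\<in>set_mset Cs. g C"
  have "\<forall>C'\<in>#Cs. \<exists>x\<in>g C'. \<forall>C''\<in>#Cs - {#C'#}. x \<notin> g C''"
  proof
    fix C' assume "C' \<in># Cs"
    then obtain x where "x \<in> g C'" "\<forall>C''\<in># add_mset C Cs - {#C'#}. x \<notin> g C''"
      using add.prems(2) by auto
    moreover have "Cs - {#C'#} \<subseteq># add_mset C Cs - {#C'#}"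
      by (simp add: subseteq_mset_def)
    ultimately show "\<exists>x\<in>g C'. \<forall>C''\<in>#Cs - {#C'#}. x \<notin> g C''" by (meson mset_subset_eqD)
  qed
  then have IH: "size Cs \<le> card ?U" using add by simp
  obtain x where x: "x \<in> g C" "x \<notin> ?U" using add.prems(2) by auto
  have "finite (g C \<union> ?U)" using add.prems(1) by simp
  then have "card (insert x ?U) \<le> card (g C \<union> ?U)" using x(1) by (intro card_mono) auto
  moreover have "finite ?U" using add.prems(1) by simp
  ultimately have "Suc (card ?U) \<le> card (g C \<union> ?U)" using x(2) by simp
  then show ?case using IH by simp
qed simp

definition shapes_on :: "nat set \<Rightarrow> (nat \<times> nat multiset) set" where
  "shapes_on S = {(s, T). s \<in> S \<and> set_mset T \<subseteq> S \<and> size T \<le> 2}"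

lemma shape_in_shapes_on: "binary_on S \<delta> \<Longrightarrow> \<tau> \<in> \<delta> \<Longrightarrow> shape \<tau> \<in> shapes_on S"
  unfolding binary_on_def shapes_on_def shape_def by auto

lemma card_shapes_on:
  assumes "finite S"
  shows "finite (shapes_on S)" "card (shapes_on S) \<le> card S * (1 + card S + card S ^ 2)"
proof -
  let ?L = "{xs. set xs \<subseteq> S \<and> length xs \<le> 2}"
  have sub: "shapes_on S \<subseteq> (\<lambda>(s, xs). (s, mset xs)) ` (S \<times> ?L)"
  proof
    fix x assume "x \<in> shapes_on S"
    then obtain s T where "x = (s, T)" "s \<in> S" "set_mset T \<subseteq> S" "size T \<le> 2"
      unfolding shapes_on_def by auto
    moreover obtain xs where "mset xs = T" using ex_mset by blast
    ultimately show "x \<in> (\<lambda>(s, xs). (s, mset xs)) ` (S \<times> ?L)"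
      by (intro image_eqI[of _ _ "(s, xs)"]) auto
  qed
  have fin: "finite (S \<times> ?L)" using assms finite_lists_length_le by blast
  then show "finite (shapes_on S)" using finite_subset[OF sub] by blast
  have "card (shapes_on S) \<le> card ((\<lambda>(s, xs). (s, mset xs)) ` (S \<times> ?L))"
    using card_mono[OF _ sub] fin by blast
  also have "\<dots> \<le> card (S \<times> ?L)" using card_image_le[OF fin] .
  also have "\<dots> = card S * (1 + card S + card S ^ 2)"
    using assms by (simp add: card_cartesian_product card_lists_length_le numeral_2_eq_2)
  finally show "card (shapes_on S) \<le> card S * (1 + card S + card S ^ 2)" .
qed

lemma skeleton_run_cycle_owns_shape:
  assumes sk: "skeleton_run \<delta> s0 (D' + C)" and C: "C \<noteq> {#}" "is_cycle \<delta> C"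
  shows "\<not> shape ` set_mset C \<subseteq> shape ` set_mset D'"
proof
  assume "shape ` set_mset C \<subseteq> shape ` set_mset D'"
  then have shapes: "shape ` set_mset (D' + C) \<subseteq> shape ` set_mset D'" by auto
  have run: "is_run \<delta> s0 (D' + C)" using sk unfolding skeleton_run_def by blast
  then have "msource D' + msource C = (mtarget D' + {#s0#}) + mtarget C"
    unfolding is_run_def by (simp add: add_ac)
  then have "msource D' = mtarget D' + {#s0#}" using C(2) unfolding is_cycle_def by simp
  then have "is_run \<delta> s0 D'" "msupp D' = msupp (D' + C)"
    using run_shape_transfer[OF run _ _ shapes] by auto
  then show False using sk C unfolding skeleton_run_def by blast
qed

lemma skeleton_run_size:
  assumes \<delta>: "binary_on S \<delta>" "finite S" and sk: "skeleton_run \<delta> s0 D"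
  shows "size D \<le> 2 ^ card S + card (shapes_on S) * (card S * 2 ^ card S)"
proof -
  have D: "set_mset D \<subseteq> \<delta>" "msource D = mtarget D + {#s0#}"
    using sk unfolding skeleton_run_def is_run_def by auto
  obtain R Cs where RCs: "D = R + \<Sum>\<^sub># Cs" "no_balanced_sub R"
    and Cs: "\<forall>C\<in>#Cs. C \<noteq> {#} \<and> is_cycle \<delta> C \<and> size C \<le> card S * 2 ^ card S"
    using decompose_small_cycles[OF \<delta> D(1)] by metis
  have "balanced (\<Sum>\<^sub># Cs)" using balanced_sum_cycles Cs by blast
  moreover have "msource R + msource (\<Sum>\<^sub># Cs) = (mtarget R + {#s0#}) + mtarget (\<Sum>\<^sub># Cs)"
    using D(2) unfolding RCs(1) by (simp add: add_ac)
  ultimately have R_bal: "msource R = mtarget R + {#s0#}" by simp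
  have "set_mset R \<subseteq> \<delta>" using D(1) RCs(1) by simp
  then have R: "size R < 2 ^ card S" by (rule no_balanced_sub_run_size[OF \<delta> _ R_bal RCs(2)])
  have owns_shape: "\<exists>x\<in>shape ` set_mset C. \<forall>C'\<in>#Cs - {#C#}. x \<notin> shape ` set_mset C'"
    if C: "C \<in># Cs" for C
  proof -
    obtain Cs' where Cs': "Cs = add_mset C Cs'" using multi_member_split[OF C] by blast
    define D' where "D' = R + \<Sum>\<^sub># Cs'"
    have "D = D' + C" unfolding D'_def RCs(1) Cs' by (simp add: add_ac)
    then have "\<not> shape ` set_mset C \<subseteq> shape ` set_mset D'"
      using skeleton_run_cycle_owns_shape[of \<delta> s0 D' C] sk Cs C by auto
    then obtain x where "x \<in> shape ` set_mset C" "x \<notin> shape ` set_mset D'" by blast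
    moreover have "shape ` set_mset C' \<subseteq> shape ` set_mset D'" if "C' \<in># Cs'" for C'
      using that unfolding D'_def by (auto dest: multi_member_split)
    ultimately show ?thesis unfolding Cs' by (simp only: add_mset_remove_trivial) blast
  qed
  have "size Cs \<le> card (\<Union>C\<in>set_mset Cs. shape ` set_mset C)"
    using size_le_card_Union_if_private[of Cs "\<lambda>C. shape ` set_mset C"] owns_shape by auto
  also have "\<dots> \<le> card (shapes_on S)"
    using card_shapes_on(1)[OF \<delta>(2)] shape_in_shapes_on[OF \<delta>(1)] D(1) RCs(1)
    by (intro card_mono) auto
  finally have "size (\<Sum>\<^sub># Cs) \<le> card (shapes_on S) * (card S * 2 ^ card S)"
    using sum_mset_mono[of Cs size "\<lambda>_. card S * 2 ^ card S"] Cs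
    by (simp add: order_trans mult_le_mono1)
  then show ?thesis using R RCs(1) by simp
qed

lemma size_le_poly_exp:
  assumes "binary_on S \<delta>" "finite S" "simple_cycle \<delta> D \<or> skeleton_run \<delta> s0 D"
  shows "size D \<le> (card S + 1) ^ 4 * 2 ^ card S"
proof (cases "simple_cycle \<delta> D")
  case True
  have "card S \<le> (card S + 1) ^ 4" using self_le_power[of "card S + 1" 4] by simp
  then show ?thesis using simple_cycle_size[OF assms(1,2) True] by (meson le_trans mult_le_mono1)
next
  case False
  let ?n = "card S"
  have "size D \<le> 2 ^ ?n + card (shapes_on S) * (?n * 2 ^ ?n)"
    using skeleton_run_size[OF assms(1,2)] assms(3) False by blast
  also have "\<dots> \<le> 2 ^ ?n + ?n * (1 + ?n + ?n ^ 2) * (?n * 2 ^ ?n)"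
    using card_shapes_on(2)[OF assms(2)] by simp
  also have "\<dots> = (1 + ?n ^ 2 + ?n ^ 3 + ?n ^ 4) * 2 ^ ?n"
    by (simp add: algebra_simps power2_eq_square power3_eq_cube power4_eq_xxxx)
  also have "\<dots> \<le> (?n + 1) ^ 4 * 2 ^ ?n"
    by (intro mult_le_mono1) (simp add: algebra_simps power2_eq_square power3_eq_cube power4_eq_xxxx)
  finally show ?thesis .
qed

lemma poly_exp_le_exp_square: "((n::nat) + 1) ^ 4 * 2 ^ n \<le> 64 * 2 ^ n\<^sup>2"
proof -
  have "(n + 1) ^ 4 \<le> (2 ^ n) ^ 4" using less_exp[of n] by (intro power_mono) (simp_all add: Suc_le_eq)
  then have "(n + 1) ^ 4 * 2 ^ n \<le> (2 ^ n) ^ 4 * 2 ^ n" by (rule mult_le_mono1)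
  also have "\<dots> = (2::nat) ^ (5 * n)" by (simp flip: power_mult power_add)
  also have "\<dots> \<le> 2 ^ (n\<^sup>2 + 6)"
  proof (intro power_increasing)
    show "5 * n \<le> n\<^sup>2 + 6"
    proof (cases "n \<le> 5")
      case True
      then have "n \<in> {0, 1, 2, 3, 4, 5}" by auto
      then show ?thesis by (auto simp: power2_eq_square)
    next
      case False
      then have "5 * n \<le> n * n" by (intro mult_le_mono1) simp
      then show ?thesis unfolding power2_eq_square by linarith
    qed
  qed simp
  finally show ?thesis by (simp add: power_add)
qed

theorem lemma6:
  shows "\<exists>(c::nat) (k::nat). \<forall>\<Sigma> S s0 \<delta> D.
     comm_grammar \<Sigma> S s0 \<delta> \<and> (simple_cycle \<delta> D \<or> skeleton_run \<delta> s0 D) \<longrightarrow>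
     vnorm (mout D) \<le> c * 2 ^ (card S ^ k)"
proof (intro exI allI impI)
  fix \<Sigma> S s0 \<delta> D
  assume G: "comm_grammar \<Sigma> S s0 \<delta> \<and> (simple_cycle \<delta> D \<or> skeleton_run \<delta> s0 D)"
  then have "set_mset D \<subseteq> \<delta>" "\<forall>\<tau>\<in>\<delta>. size (tr_out \<tau>) \<le> 1" and S: "finite S"
    unfolding simple_cycle_def is_cycle_def skeleton_run_def is_run_def comm_grammar_def by blast+
  then have "vnorm (mout D) \<le> size D" using vnorm_le_size size_mout_le by (meson le_trans subsetD)
  also have "\<dots> \<le> (card S + 1) ^ 4 * 2 ^ card S" using size_le_poly_exp[OF comm_grammar_binary_on S] G by blast
  also have "\<dots> \<le> 64 * 2 ^ (card S ^ 2)" by (rule poly_exp_le_exp_square)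
  finally show "vnorm (mout D) \<le> 64 * 2 ^ (card S ^ 2)" .
qed

end
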